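(* Let $\mathbf{Sym}$ be the free associative (noncommutative) algebra over $\mathbb{C}$ generated by $S_1,S_2,\dots$, graded by $\deg S_n=n$, let $\widehat{\mathbf{Sym}}$ be its completion (formal sums $\sum_{n\ge 0}f_n$ with $f_n$ homogeneous of degree $n$), and put $S_0=1$ and $\sigma_1=\sum_{n\ge 0}S_n$. Let $K_n\in\mathbf{Sym}$ ($n\ge 0$) be the unique homogeneous elements of degree $n$ with $K_0=1$ such that $$\sigma_1=\sum_{n\ge 0}K_n\,\sigma_1^{\,n},$$ and let $g=\sum_{n\ge0}g_n$ ($g_n$ homogeneous of degree $n$, $g_0=1$) be the unique element of $\widehat{\mathbf{Sym}}$ such that $g=\sum_{n\ge 0}S_n\,g^{\,n}$. Then $$1+\sum_{n\ge 1}K_n \;=\; \big(g^{-1}\big)(-A),$$ where $g^{-1}$ is the multiplicative inverse of $g$ in $\widehat{\mathbf{Sym}}$ and $f\mapsto f(-A)$ is the map defined in the context.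
   Context: The noncommutative elementary functions $\Lambda_n$ are defined by $\Lambda_0=1$ and $\big(\sum_{n\ge0}S_nt^n\big)\big(\sum_{n\ge0}(-1)^n\Lambda_nt^n\big)=1$. For $f\in\widehat{\mathbf{Sym}}$, $f(-A)$ denotes the image of $f$ under the (continuous) algebra automorphism of $\widehat{\mathbf{Sym}}$ sending $S_n\mapsto(-1)^n\Lambda_n$ for all $n\ge1$. *)

theory Defs
  imports Complex_Main
begin

text \<open>A word
  [a1,...,ak] of naturals encodes the monomial S_(a1+1) ... S_(ak+1);
  an element of the completion of Sym is an arbitrary coefficient function
  on words.\<close>

type_synonym ncsym = "nat list \<Rightarrow> complex"

definition wdeg :: "nat list \<Rightarrow> nat" where
  "wdeg w = sum_list (map Suc w)"

definition nc_one :: ncsym where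
  "nc_one = (\<lambda>w. if w = [] then 1 else 0)"

definition nc_zero :: ncsym where
  "nc_zero = (\<lambda>w. 0)"

definition nc_add :: "ncsym \<Rightarrow> ncsym \<Rightarrow> ncsym" where
  "nc_add f g = (\<lambda>w. f w + g w)"

definition nc_smult :: "complex \<Rightarrow> ncsym \<Rightarrow> ncsym" where
  "nc_smult c f = (\<lambda>w. c * f w)"

definition nc_mult :: "ncsym \<Rightarrow> ncsym \<Rightarrow> ncsym" where
  "nc_mult f g = (\<lambda>w. \<Sum>k\<le>length w. f (take k w) * g (drop k w))"

primrec nc_pow :: "ncsym \<Rightarrow> nat \<Rightarrow> ncsym" where
  "nc_pow f 0 = nc_one"
| "nc_pow f (Suc n) = nc_mult f (nc_pow f n)"

definition S :: "nat \<Rightarrow> ncsym" where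
  "S n = (if n = 0 then nc_one else (\<lambda>w. if w = [n - 1] then 1 else 0))"

definition homogeneous :: "nat \<Rightarrow> ncsym \<Rightarrow> bool" where
  "homogeneous d f \<longleftrightarrow> (\<forall>w. f w \<noteq> 0 \<longrightarrow> wdeg w = d)"

text \<open>Formal (coefficientwise) sum of a family; it is the correct formal sum
  whenever each coefficient is nonzero for only finitely many members,
  which holds for every family used below (member n has order \<ge> n).\<close>
definition fsum :: "(nat \<Rightarrow> ncsym) \<Rightarrow> ncsym" where
  "fsum F = (\<lambda>w. \<Sum>n\<in>{n. F n w \<noteq> 0}. F n w)"

definition sigma1 :: ncsym where
  "sigma1 = fsum S"

text \<open>Image of the monomial of word w under the algebra morphism
  S_n \<mapsto> (-1)^n Lam_n.\<close>
definition negA_word :: "(nat \<Rightarrow> ncsym) \<Rightarrow> nat list \<Rightarrow> ncsym" where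
  "negA_word Lam w = foldr (\<lambda>a acc. nc_mult (nc_smult ((-1) ^ Suc a) (Lam (Suc a))) acc) w nc_one"

text \<open>f(-A): continuous extension; since Lam_n is homogeneous of degree n,
  the image of word w is homogeneous of degree wdeg w, so the coefficient at v
  only receives contributions from words w of the same degree as v.\<close>
definition negA :: "(nat \<Rightarrow> ncsym) \<Rightarrow> ncsym \<Rightarrow> ncsym" where
  "negA Lam f = (\<lambda>v. \<Sum>w\<in>{w. wdeg w = wdeg v}. f w * negA_word Lam w v)"

end

theory Submission
  imports Defs
begin

text \<open>Put \<open>x = g(-A)\<close>.  Since \<open>f \<mapsto> f(-A)\<close> is a continuous algebra morphism, the
  equation of \<open>g\<close> becomes \<open>x = \<Sum>\<^sub>n (-1)\<^sup>n \<Lambda>\<^sub>n x\<^sup>n\<close>; combined with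
  \<open>\<Sum>\<^bsub>i+j=n\<^esub> S\<^sub>i (-1)\<^sup>j \<Lambda>\<^sub>j = [n = 0]\<close> this gives \<open>(\<Sum>\<^sub>i S\<^sub>i x\<^sup>i) x = 1\<close>.
  Let \<open>T\<^sub>x f = \<Sum>\<^sub>d f\<^sub>d x\<^sup>d\<close>, where \<open>f\<^sub>d\<close> is the degree-\<open>d\<close> component of \<open>f\<close>.
  Then \<open>T\<^sub>x (f F) = f T\<^sub>x(F) x\<^sup>n\<close> for \<open>f\<close> homogeneous of degree \<open>n\<close>, so by induction
  \<open>T\<^sub>x(\<sigma>\<^sub>1\<^sup>n) x\<^sup>n = 1\<close>, and applying \<open>T\<^sub>x\<close> to \<open>\<sigma>\<^sub>1 = \<Sum>\<^sub>n K\<^sub>n \<sigma>\<^sub>1\<^sup>n\<close> gives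
  \<open>\<Sum>\<^sub>i S\<^sub>i x\<^sup>i = T\<^sub>x(\<sigma>\<^sub>1) = \<Sum>\<^sub>n K\<^sub>n\<close>.  Hence \<open>(\<Sum>\<^sub>n K\<^sub>n) x = 1\<close>, that is,
  \<open>\<Sum>\<^sub>n K\<^sub>n = x\<^sup>-\<^sup>1 = g\<^sup>-\<^sup>1(-A)\<close>.\<close>

lemma wdeg_Nil [simp]: "wdeg [] = 0"
  and wdeg_Cons [simp]: "wdeg (a # w) = Suc a + wdeg w"
  and wdeg_append [simp]: "wdeg (u @ v) = wdeg u + wdeg v"
  by (simp_all add: wdeg_def)

lemma wdeg_take_drop: "wdeg (take k w) + wdeg (drop k w) = wdeg w"
  by (metis append_take_drop_id wdeg_append)

lemma finite_wdeg_le: "finite {w. wdeg w \<le> D}"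
proof (rule finite_subset)
  have elem: "Suc a \<le> wdeg w" if "a \<in> set w" for a w
    using that by (induction w) auto
  have len: "length w \<le> wdeg w" for w
    by (induction w) auto
  show "{w. wdeg w \<le> D} \<subseteq> {w. set w \<subseteq> {..<D} \<and> length w \<le> D}"
    using elem len by (force intro: le_trans)
  show "finite {w. set w \<subseteq> {..<D} \<and> length w \<le> D}"
    by (rule finite_lists_length_le) simp
qed

section \<open>The algebra of noncommutative series\<close>

lemma nc_mult_Nil: "nc_mult f g [] = f [] * g []"
  by (simp add: nc_mult_def)

lemma nc_mult_Cons: "nc_mult f g (a # w) = f [] * g (a # w) + nc_mult (\<lambda>u. f (a # u)) g w"
  unfolding nc_mult_def by (simp add: sum.atMost_Suc_shift del: sum.atMost_Suc)

lemma nc_mult_add_left: "nc_mult (\<lambda>w. f w + g w) h = (\<lambda>w. nc_mult f h w + nc_mult g h w)"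
  by (rule ext) (simp add: nc_mult_def distrib_right sum.distrib)

lemma nc_mult_scale_left: "nc_mult (\<lambda>w. c * f w) h = (\<lambda>w. c * nc_mult f h w)"
  by (rule ext) (simp add: nc_mult_def sum_distrib_left mult.assoc)

lemma nc_mult_assoc: "nc_mult (nc_mult f g) h = nc_mult f (nc_mult g h)"
proof
  fix w show "nc_mult (nc_mult f g) h w = nc_mult f (nc_mult g h) w"
  proof (induction w arbitrary: f g h)
    case Nil
    show ?case by (simp add: nc_mult_Nil)
  next
    case (Cons a w)
    have "nc_mult (nc_mult f g) h (a # w) = f [] * g [] * h (a # w) +
       nc_mult (\<lambda>u. f [] * g (a # u) + nc_mult (\<lambda>u. f (a # u)) g u) h w"
      by (simp add: nc_mult_Cons nc_mult_Nil)
    also have "\<dots> = f [] * g [] * h (a # w) + nc_mult (nc_mult (\<lambda>u. f (a # u)) g) h w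
        + f [] * nc_mult (\<lambda>u. g (a # u)) h w"
      by (simp add: nc_mult_add_left nc_mult_scale_left algebra_simps)
    also have "\<dots> = f [] * g [] * h (a # w) + nc_mult (\<lambda>u. f (a # u)) (nc_mult g h) w
        + f [] * nc_mult (\<lambda>u. g (a # u)) h w"
      using Cons by simp
    also have "\<dots> = nc_mult f (nc_mult g h) (a # w)"
      by (simp add: nc_mult_Cons nc_mult_Nil algebra_simps)
    finally show ?case .
  qed
qed

lemma nc_mult_one_left [simp]: "nc_mult nc_one f = f"
proof
  fix w
  have "nc_mult nc_one f w = (\<Sum>k\<le>length w. if k = 0 then f w else 0)"
    unfolding nc_mult_def nc_one_def by (rule sum.cong) auto
  then show "nc_mult nc_one f w = f w" by simp
qed

lemma nc_mult_one_right [simp]: "nc_mult f nc_one = f"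
proof
  fix w
  have "nc_mult f nc_one w = (\<Sum>k\<le>length w. if k = length w then f w else 0)"
    unfolding nc_mult_def nc_one_def by (rule sum.cong) auto
  then show "nc_mult f nc_one w = f w" by simp
qed

lemma nc_mult_zero_left [simp]: "nc_mult nc_zero f = nc_zero"
  and nc_mult_zero_right [simp]: "nc_mult f nc_zero = nc_zero"
  by (auto simp: nc_mult_def nc_zero_def)

lemma nc_smult_one [simp]: "nc_smult 1 f = f"
  by (simp add: nc_smult_def)

lemma nc_pow_add: "nc_pow x (m + n) = nc_mult (nc_pow x m) (nc_pow x n)"
  by (induction m) (simp_all add: nc_mult_assoc)

lemma nc_pow_Suc_right: "nc_pow x (Suc n) = nc_mult (nc_pow x n) x"
  using nc_pow_add[of x n 1] by simp

lemma nc_mult_inverse_unique: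
  assumes "nc_mult f x = nc_one" and "nc_mult x u = nc_one"
  shows "f = u"
  by (metis assms nc_mult_assoc nc_mult_one_left nc_mult_one_right)

definition vanishes_below :: "nat \<Rightarrow> ncsym \<Rightarrow> bool" where
  "vanishes_below m f \<longleftrightarrow> (\<forall>w. f w \<noteq> 0 \<longrightarrow> m \<le> wdeg w)"

text \<open>Families whose formal sum \<open>fsum\<close> is a genuine (degreewise finite) sum.\<close>

definition nc_summable :: "(nat \<Rightarrow> ncsym) \<Rightarrow> bool" where
  "nc_summable F \<longleftrightarrow> (\<forall>n. vanishes_below n (F n))"

lemma vanishes_below_zero [simp]: "vanishes_below m nc_zero"
  by (simp add: vanishes_below_def nc_zero_def)

lemma homogeneous_vanishes_below: "homogeneous n f \<Longrightarrow> vanishes_below n f"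
  by (auto simp: vanishes_below_def homogeneous_def)

lemma nc_mult_nonzero:
  assumes "nc_mult f g w \<noteq> 0"
  obtains k where "f (take k w) \<noteq> 0" "g (drop k w) \<noteq> 0"
proof -
  from assms obtain k where "f (take k w) * g (drop k w) \<noteq> 0"
    unfolding nc_mult_def by (meson sum.not_neutral_contains_not_neutral)
  then show ?thesis using that by auto
qed

lemma vanishes_below_mult:
  "vanishes_below m f \<Longrightarrow> vanishes_below n g \<Longrightarrow> vanishes_below (m + n) (nc_mult f g)"
  unfolding vanishes_below_def by (metis add_le_mono nc_mult_nonzero wdeg_take_drop)

lemma vanishes_below_mult_left: "vanishes_below n f \<Longrightarrow> vanishes_below n (nc_mult f g)"
  using vanishes_below_mult[of n f 0 g] by (simp add: vanishes_below_def)

lemma vanishes_below_mult_right: "vanishes_below n g \<Longrightarrow> vanishes_below n (nc_mult f g)"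
  using vanishes_below_mult[of 0 f n g] by (simp add: vanishes_below_def)

lemma homogeneous_mult: "homogeneous m f \<Longrightarrow> homogeneous n g \<Longrightarrow> homogeneous (m + n) (nc_mult f g)"
  unfolding homogeneous_def by (metis nc_mult_nonzero wdeg_take_drop)

lemma homogeneous_smult: "homogeneous m f \<Longrightarrow> homogeneous m (nc_smult c f)"
  by (auto simp: homogeneous_def nc_smult_def)

lemma homogeneous_smult_iff: "c \<noteq> 0 \<Longrightarrow> homogeneous m (nc_smult c f) \<longleftrightarrow> homogeneous m f"
  by (auto simp: homogeneous_def nc_smult_def)

lemma homogeneous_one: "homogeneous 0 nc_one"
  by (auto simp: homogeneous_def nc_one_def)

lemma S_0 [simp]: "S 0 = nc_one"
  by (simp add: S_def)

lemma homogeneous_S: "homogeneous n (S n)"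
  by (auto simp: homogeneous_def S_def nc_one_def)

lemma nc_summable_homogeneous_mult: "(\<And>n. homogeneous n (F n)) \<Longrightarrow> nc_summable (\<lambda>n. nc_mult (F n) (G n))"
  unfolding nc_summable_def by (auto intro: vanishes_below_mult_left homogeneous_vanishes_below)

lemma nc_summable_S: "nc_summable S"
  unfolding nc_summable_def by (auto intro: homogeneous_vanishes_below homogeneous_S)

lemma nc_summable_mult_left: "nc_summable F \<Longrightarrow> nc_summable (\<lambda>n. nc_mult f (F n))"
  by (auto simp: nc_summable_def intro: vanishes_below_mult_right)

lemma nc_summable_mult_right: "nc_summable F \<Longrightarrow> nc_summable (\<lambda>n. nc_mult (F n) f)"
  by (auto simp: nc_summable_def intro: vanishes_below_mult_left)

section \<open>Formal sums\<close>

lemma fsum_eq_sum_atMost: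
  assumes "\<And>n. D < n \<Longrightarrow> F n w = 0"
  shows "fsum F w = (\<Sum>n\<le>D. F n w)"
  unfolding fsum_def
  by (rule sum.mono_neutral_left) (use assms in \<open>auto simp: not_less[symmetric]\<close>)

lemma fsum_nc_summable_le:
  "nc_summable F \<Longrightarrow> wdeg w \<le> D \<Longrightarrow> fsum F w = (\<Sum>n\<le>D. F n w)"
  by (rule fsum_eq_sum_atMost) (auto simp: nc_summable_def vanishes_below_def, meson le_trans not_le)

lemma fsum_upto: "fsum (\<lambda>i. if i \<le> n then F i else nc_zero) = (\<lambda>w. \<Sum>i\<le>n. F i w)"
  by (rule ext, subst fsum_eq_sum_atMost[where D = n]) (auto simp: nc_zero_def intro: sum.cong)

lemma fsum_single: "(\<And>n. n > 0 \<Longrightarrow> F n = nc_zero) \<Longrightarrow> fsum F = F 0"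
  by (rule ext, subst fsum_eq_sum_atMost[where D = 0]) (auto simp: nc_zero_def)

lemma nc_add_fsum_split_first:
  assumes "nc_summable F"
  shows "nc_add (F 0) (fsum (\<lambda>n. if n = 0 then nc_zero else F n)) = fsum F"
proof
  fix w
  have tail: "nc_summable (\<lambda>n. if n = 0 then nc_zero else F n)"
    using assms by (simp add: nc_summable_def)
  show "nc_add (F 0) (fsum (\<lambda>n. if n = 0 then nc_zero else F n)) w = fsum F w"
    unfolding fsum_nc_summable_le[OF assms order_refl] fsum_nc_summable_le[OF tail order_refl] nc_add_def
    by (simp add: sum.atMost_shift nc_zero_def)
qed

lemma fsum_mult_left:
  assumes "nc_summable F"
  shows "nc_mult f (fsum F) = fsum (\<lambda>n. nc_mult f (F n))"
proof
  fix w
  have "nc_mult f (fsum F) w = (\<Sum>k\<le>length w. f (take k w) * (\<Sum>n\<le>wdeg w. F n (drop k w)))"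
    unfolding nc_mult_def
    by (intro sum.cong refl arg_cong2[where f = "(*)"] fsum_nc_summable_le[OF assms])
       (metis le_add2 wdeg_take_drop)
  also have "\<dots> = (\<Sum>n\<le>wdeg w. nc_mult f (F n) w)"
    unfolding nc_mult_def sum_distrib_left by (rule sum.swap)
  also have "\<dots> = fsum (\<lambda>n. nc_mult f (F n)) w"
    by (rule fsum_nc_summable_le[symmetric, OF nc_summable_mult_left[OF assms] order_refl])
  finally show "nc_mult f (fsum F) w = fsum (\<lambda>n. nc_mult f (F n)) w" .
qed

lemma fsum_mult_right:
  assumes "nc_summable F"
  shows "nc_mult (fsum F) f = fsum (\<lambda>n. nc_mult (F n) f)"
proof
  fix w
  have "nc_mult (fsum F) f w = (\<Sum>k\<le>length w. (\<Sum>n\<le>wdeg w. F n (take k w)) * f (drop k w))"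
    unfolding nc_mult_def
    by (intro sum.cong refl arg_cong2[where f = "(*)"] fsum_nc_summable_le[OF assms])
       (metis le_add1 wdeg_take_drop)
  also have "\<dots> = (\<Sum>n\<le>wdeg w. nc_mult (F n) f w)"
    unfolding nc_mult_def sum_distrib_right by (rule sum.swap)
  also have "\<dots> = fsum (\<lambda>n. nc_mult (F n) f) w"
    by (rule fsum_nc_summable_le[symmetric, OF nc_summable_mult_right[OF assms] order_refl])
  finally show "nc_mult (fsum F) f w = fsum (\<lambda>n. nc_mult (F n) f) w" .
qed

lemma fsum_swap:
  assumes "\<And>d n w. G d n w \<noteq> 0 \<Longrightarrow> d \<le> wdeg w \<and> n \<le> wdeg w"
  shows "fsum (\<lambda>d. fsum (G d)) = fsum (\<lambda>n. fsum (\<lambda>d. G d n))"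
proof
  fix w
  let ?D = "wdeg w"
  have inner1: "fsum (G d) w = (\<Sum>n\<le>?D. G d n w)" for d
    by (rule fsum_eq_sum_atMost) (use assms in force)
  have inner2: "fsum (\<lambda>d. G d n) w = (\<Sum>d\<le>?D. G d n w)" for n
    by (rule fsum_eq_sum_atMost) (use assms in force)
  have "fsum (\<lambda>d. fsum (G d)) w = (\<Sum>d\<le>?D. fsum (G d) w)"
    using assms by (intro fsum_eq_sum_atMost) (force simp: inner1 intro!: sum.neutral)
  also have "\<dots> = (\<Sum>n\<le>?D. fsum (\<lambda>d. G d n) w)"
    unfolding inner1 inner2 by (rule sum.swap)
  also have "\<dots> = fsum (\<lambda>n. fsum (\<lambda>d. G d n)) w"
    using assms by (intro fsum_eq_sum_atMost[symmetric]) (force simp: inner2 intro!: sum.neutral)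
  finally show "fsum (\<lambda>d. fsum (G d)) w = fsum (\<lambda>n. fsum (\<lambda>d. G d n)) w" .
qed

lemma fsum_triangle:
  assumes "\<And>i j. vanishes_below (i + j) (G i j)"
  shows "fsum (\<lambda>i. fsum (G i)) = fsum (\<lambda>n. fsum (\<lambda>i. if i \<le> n then G i (n - i) else nc_zero))"
proof
  fix w
  let ?D = "wdeg w"
  have vanish: "G i j w = 0" if "?D < i + j" for i j
    using assms[of i j] that by (auto simp: vanishes_below_def)
  have inner: "fsum (G i) w = (\<Sum>j\<le>?D. G i j w)" for i
    by (rule fsum_eq_sum_atMost) (simp add: vanish)
  have "fsum (\<lambda>i. fsum (G i)) w = (\<Sum>i\<le>?D. \<Sum>j\<le>?D. G i j w)"
    by (subst fsum_eq_sum_atMost[where D = ?D]) (simp_all add: inner vanish)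
  also have "\<dots> = (\<Sum>(i, j)\<in>{(i, j). i + j \<le> ?D}. G i j w)"
    unfolding sum.cartesian_product
    by (rule sum.mono_neutral_right) (auto simp: not_le[symmetric] intro: vanish)
  also have "\<dots> = (\<Sum>n\<le>?D. \<Sum>i\<le>n. G i (n - i) w)"
    by (rule sum.triangle_reindex_eq)
  also have "\<dots> = fsum (\<lambda>n. fsum (\<lambda>i. if i \<le> n then G i (n - i) else nc_zero)) w"
    by (subst fsum_eq_sum_atMost[where D = ?D]) (simp_all add: fsum_upto vanish)
  finally show "fsum (\<lambda>i. fsum (G i)) w = fsum (\<lambda>n. fsum (\<lambda>i. if i \<le> n then G i (n - i) else nc_zero)) w" .
qed

lemma fsum_shift: "fsum (\<lambda>d. if n \<le> d then G (d - n) else nc_zero) = fsum G"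
proof
  fix w
  have supp: "{d. (if n \<le> d then G (d - n) else nc_zero) w \<noteq> 0} = (\<lambda>j. j + n) ` {j. G j w \<noteq> 0}"
    by (auto simp: nc_zero_def image_iff split: if_splits) (metis le_add_diff_inverse2)
  show "fsum (\<lambda>d. if n \<le> d then G (d - n) else nc_zero) w = fsum G w"
    unfolding fsum_def supp by (subst sum.reindex) (auto simp: inj_on_def)
qed

section \<open>Right substitution\<close>

definition hcomp :: "nat \<Rightarrow> ncsym \<Rightarrow> ncsym" where
  "hcomp d f = (\<lambda>w. if wdeg w = d then f w else 0)"

definition nc_subst :: "ncsym \<Rightarrow> ncsym \<Rightarrow> ncsym" where
  "nc_subst x f = fsum (\<lambda>d. nc_mult (hcomp d f) (nc_pow x d))"

lemma homogeneous_hcomp: "homogeneous d (hcomp d f)"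
  by (auto simp: homogeneous_def hcomp_def)

lemma nc_summable_hcomp_mult: "nc_summable (\<lambda>d. nc_mult (hcomp d f) (G d))"
  by (intro nc_summable_homogeneous_mult homogeneous_hcomp)

lemma hcomp_fsum: "hcomp d (fsum F) = fsum (\<lambda>n. hcomp d (F n))"
  by (auto simp: hcomp_def fsum_def)

lemma hcomp_homogeneous_mult:
  assumes hom: "homogeneous n f"
  shows "hcomp d (nc_mult f F) = (if n \<le> d then nc_mult f (hcomp (d - n) F) else nc_zero)"
proof
  fix w
  have f_zero: "f (take k w) = 0" if "wdeg (take k w) \<noteq> n" for k
    using hom that by (auto simp: homogeneous_def)
  note split = wdeg_take_drop[of _ w]
  show "hcomp d (nc_mult f F) w = (if n \<le> d then nc_mult f (hcomp (d - n) F) else nc_zero) w"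
  proof (cases "n \<le> d")
    case le: True
    show ?thesis
    proof (cases "wdeg w = d")
      case True
      with le show ?thesis
        unfolding hcomp_def nc_mult_def
        by (auto intro!: sum.cong) (metis f_zero split add_diff_cancel_left' mult_zero_left)
    next
      case False
      with le show ?thesis
        unfolding hcomp_def nc_mult_def
        by (auto intro!: sum.neutral) (metis f_zero split le_add_diff_inverse)
    qed
  next
    case False
    have "nc_mult f F w = 0" if "wdeg w = d"
      unfolding nc_mult_def by (rule sum.neutral) (metis False f_zero split le_add1 mult_zero_left that)
    with False show ?thesis by (simp add: hcomp_def nc_zero_def)
  qed
qed

lemma nc_subst_homogeneous_mult:
  assumes hom: "homogeneous n f"
  shows "nc_subst x (nc_mult f F) = nc_mult f (nc_mult (nc_subst x F) (nc_pow x n))"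
proof -
  let ?T = "\<lambda>j. nc_mult (nc_mult (hcomp j F) (nc_pow x j)) (nc_pow x n)"
  have "nc_subst x (nc_mult f F) = fsum (\<lambda>d. if n \<le> d then nc_mult f (?T (d - n)) else nc_zero)"
    unfolding nc_subst_def
    by (intro arg_cong[where f = fsum] ext)
       (auto simp: hcomp_homogeneous_mult[OF hom] nc_mult_assoc nc_pow_add[symmetric])
  also have "\<dots> = fsum (\<lambda>j. nc_mult f (?T j))"
    by (rule fsum_shift)
  also have "\<dots> = nc_mult f (nc_mult (nc_subst x F) (nc_pow x n))"
    unfolding nc_subst_def
    by (simp add: fsum_mult_left fsum_mult_right nc_summable_mult_right nc_summable_hcomp_mult)
  finally show ?thesis .
qed

lemma nc_subst_fsum:
  assumes "nc_summable F"
  shows "nc_subst x (fsum F) = fsum (\<lambda>n. nc_subst x (F n))"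
proof -
  have summ: "nc_summable (\<lambda>n. hcomp d (F n))" for d
    using assms by (auto simp: nc_summable_def vanishes_below_def hcomp_def)
  have "nc_subst x (fsum F) = fsum (\<lambda>d. fsum (\<lambda>n. nc_mult (hcomp d (F n)) (nc_pow x d)))"
    unfolding nc_subst_def hcomp_fsum by (simp add: fsum_mult_right[OF summ])
  also have "\<dots> = fsum (\<lambda>n. fsum (\<lambda>d. nc_mult (hcomp d (F n)) (nc_pow x d)))"
  proof (rule fsum_swap)
    fix d n w
    assume "nc_mult (hcomp d (F n)) (nc_pow x d) w \<noteq> 0"
    moreover have "vanishes_below d (nc_mult (hcomp d (F n)) (nc_pow x d))"
      by (intro vanishes_below_mult_left homogeneous_vanishes_below homogeneous_hcomp)
    moreover have "vanishes_below n (nc_mult (hcomp d (F n)) (nc_pow x d))"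
      using summ[of d] by (intro vanishes_below_mult_left) (simp add: nc_summable_def)
    ultimately show "d \<le> wdeg w \<and> n \<le> wdeg w" by (auto simp: vanishes_below_def)
  qed
  finally show ?thesis unfolding nc_subst_def .
qed

lemma nc_subst_one: "nc_subst x nc_one = nc_one"
proof -
  have "nc_subst x nc_one = nc_mult (hcomp 0 nc_one) (nc_pow x 0)"
    unfolding nc_subst_def
  proof (rule fsum_single)
    fix n :: nat
    assume "0 < n"
    then have "hcomp n nc_one = nc_zero"
      by (auto simp: hcomp_def nc_one_def nc_zero_def)
    then show "nc_mult (hcomp n nc_one) (nc_pow x n) = nc_zero" by simp
  qed
  also have "hcomp 0 nc_one = nc_one"
    by (auto simp: hcomp_def nc_one_def)
  finally show ?thesis by simp
qed

lemma nc_subst_homogeneous: "homogeneous n f \<Longrightarrow> nc_subst x f = nc_mult f (nc_pow x n)"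
  using nc_subst_homogeneous_mult[of n f x nc_one] by (simp add: nc_subst_one)

section \<open>The morphism \<open>f \<mapsto> f(-A)\<close>\<close>

lemma bij_betw_append_split:
  "bij_betw (\<lambda>(w1, w2). (w1 @ w2, length w1)) {(w1, w2). wdeg w1 + wdeg w2 \<le> D}
     (Sigma {w. wdeg w \<le> D} (\<lambda>w. {..length w}))"
  by (rule bij_betw_byWitness[where f' = "\<lambda>(w, k). (take k w, drop k w)"])
     (auto simp: wdeg_take_drop)

lemma sum_wdeg_le_nc_mult:
  assumes "\<And>w1 w2. D < wdeg w1 + wdeg w2 \<Longrightarrow> \<phi> (w1 @ w2) = 0"
  shows "(\<Sum>w\<in>{w. wdeg w \<le> D}. nc_mult f F w * \<phi> w)
       = (\<Sum>(w1, w2)\<in>{w. wdeg w \<le> D} \<times> {w. wdeg w \<le> D}. f w1 * F w2 * \<phi> (w1 @ w2))"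
proof -
  let ?B = "{w. wdeg w \<le> D}"
  have "(\<Sum>w\<in>?B. nc_mult f F w * \<phi> w) = (\<Sum>(w, k)\<in>Sigma ?B (\<lambda>w. {..length w}). f (take k w) * F (drop k w) * \<phi> w)"
    unfolding nc_mult_def sum_distrib_right by (rule sum.Sigma) (auto simp: finite_wdeg_le)
  also have "\<dots> = (\<Sum>(w1, w2)\<in>{(w1, w2). wdeg w1 + wdeg w2 \<le> D}. f w1 * F w2 * \<phi> (w1 @ w2))"
    by (subst sum.reindex_bij_betw[OF bij_betw_append_split, symmetric]) (auto intro: sum.cong)
  also have "\<dots> = (\<Sum>(w1, w2)\<in>?B \<times> ?B. f w1 * F w2 * \<phi> (w1 @ w2))"
    by (intro sum.mono_neutral_left) (auto simp: finite_wdeg_le, metis assms not_le)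
  finally show ?thesis .
qed

lemma negA_word_Nil [simp]: "negA_word Lam [] = nc_one"
  by (simp add: negA_word_def)

lemma negA_word_Cons:
  "negA_word Lam (a # w) = nc_mult (nc_smult ((-1) ^ Suc a) (Lam (Suc a))) (negA_word Lam w)"
  by (simp add: negA_word_def)

lemma negA_word_append: "negA_word Lam (u @ v) = nc_mult (negA_word Lam u) (negA_word Lam v)"
  by (induction u) (simp_all add: negA_word_Cons nc_mult_assoc)

context
  fixes Lam :: "nat \<Rightarrow> ncsym"
  assumes Lam_hom: "\<And>n. homogeneous n (Lam n)"
begin

lemma homogeneous_negA_word: "homogeneous (wdeg w) (negA_word Lam w)"
proof (induction w)
  case Nil
  show ?case by (simp add: homogeneous_one)
next
  case (Cons a w)
  show ?case
    unfolding negA_word_Cons wdeg_Cons by (rule homogeneous_mult[OF homogeneous_smult[OF Lam_hom] Cons.IH])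
qed

lemma negA_word_eq_zero: "wdeg w \<noteq> wdeg v \<Longrightarrow> negA_word Lam w v = 0"
  using homogeneous_negA_word[of w] by (auto simp: homogeneous_def)

lemma negA_eq_sum_wdeg_le:
  "wdeg v \<le> D \<Longrightarrow> negA Lam f v = (\<Sum>w\<in>{w. wdeg w \<le> D}. f w * negA_word Lam w v)"
  unfolding negA_def
  by (rule sum.mono_neutral_left) (auto simp: finite_wdeg_le negA_word_eq_zero)

lemma negA_single_word:
  assumes "\<And>w. w \<noteq> wz \<Longrightarrow> f w = 0"
  shows "negA Lam f = (\<lambda>v. f wz * negA_word Lam wz v)"
proof
  fix v
  have "negA Lam f v = (\<Sum>w\<in>{w. wdeg w \<le> max (wdeg v) (wdeg wz)}. f w * negA_word Lam w v)"
    by (rule negA_eq_sum_wdeg_le) simp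
  also have "\<dots> = f wz * negA_word Lam wz v"
    by (subst sum.remove[of _ wz]) (auto simp: finite_wdeg_le assms intro!: sum.neutral)
  finally show "negA Lam f v = f wz * negA_word Lam wz v" .
qed

lemma negA_one: "negA Lam nc_one = nc_one"
  by (subst negA_single_word[where wz = "[]"]) (auto simp: nc_one_def)

lemma negA_S:
  assumes "Lam 0 = nc_one"
  shows "negA Lam (S n) = nc_smult ((-1) ^ n) (Lam n)"
proof (cases n)
  case 0
  with assms show ?thesis by (simp add: S_def negA_one)
next
  case (Suc a)
  then show ?thesis
    by (subst negA_single_word[where wz = "[a]"]) (auto simp: S_def negA_word_Cons)
qed

lemma negA_mult: "negA Lam (nc_mult f F) = nc_mult (negA Lam f) (negA Lam F)"
proof
  fix u
  let ?B = "{w. wdeg w \<le> wdeg u}"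
  let ?N = "negA_word Lam"
  have "negA Lam (nc_mult f F) u = (\<Sum>w\<in>?B. nc_mult f F w * ?N w u)"
    by (rule negA_eq_sum_wdeg_le) simp
  also have "\<dots> = (\<Sum>(w1, w2)\<in>?B \<times> ?B. f w1 * F w2 * ?N (w1 @ w2) u)"
    by (rule sum_wdeg_le_nc_mult) (simp add: negA_word_eq_zero)
  also have "\<dots> = (\<Sum>(w1, w2)\<in>?B \<times> ?B. \<Sum>j\<le>length u.
        (f w1 * ?N w1 (take j u)) * (F w2 * ?N w2 (drop j u)))"
    by (rule sum.cong) (auto simp: negA_word_append nc_mult_def sum_distrib_left mult_ac)
  also have "\<dots> = (\<Sum>j\<le>length u. \<Sum>w1\<in>?B. \<Sum>w2\<in>?B.
        (f w1 * ?N w1 (take j u)) * (F w2 * ?N w2 (drop j u)))"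
    unfolding sum.cartesian_product[symmetric]
    by (subst sum.swap, rule sum.cong[OF refl], rule sum.swap)
  also have "\<dots> = (\<Sum>j\<le>length u. negA Lam f (take j u) * negA Lam F (drop j u))"
  proof (rule sum.cong[OF refl])
    fix j
    have "wdeg (take j u) \<le> wdeg u" "wdeg (drop j u) \<le> wdeg u"
      using wdeg_take_drop[of j u] by linarith+
    then show "(\<Sum>w1\<in>?B. \<Sum>w2\<in>?B. (f w1 * ?N w1 (take j u)) * (F w2 * ?N w2 (drop j u)))
        = negA Lam f (take j u) * negA Lam F (drop j u)"
      by (simp add: negA_eq_sum_wdeg_le sum_product)
  qed
  also have "\<dots> = nc_mult (negA Lam f) (negA Lam F) u"
    by (simp add: nc_mult_def)
  finally show "negA Lam (nc_mult f F) u = nc_mult (negA Lam f) (negA Lam F) u" .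
qed

lemma negA_pow: "negA Lam (nc_pow f n) = nc_pow (negA Lam f) n"
  by (induction n) (simp_all add: negA_one negA_mult)

lemma negA_fsum:
  assumes summ: "nc_summable F"
  shows "negA Lam (fsum F) = fsum (\<lambda>n. negA Lam (F n))"
proof
  fix v
  let ?D = "wdeg v"
  let ?B = "{w. wdeg w \<le> ?D}"
  have "negA Lam (fsum F) v = (\<Sum>w\<in>?B. fsum F w * negA_word Lam w v)"
    by (rule negA_eq_sum_wdeg_le) simp
  also have "\<dots> = (\<Sum>w\<in>?B. \<Sum>n\<le>?D. F n w * negA_word Lam w v)"
    by (rule sum.cong) (auto simp: fsum_nc_summable_le[OF summ] sum_distrib_right)
  also have "\<dots> = (\<Sum>n\<le>?D. negA Lam (F n) v)"
    by (subst sum.swap) (simp add: negA_eq_sum_wdeg_le[of v ?D])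
  also have "\<dots> = fsum (\<lambda>n. negA Lam (F n)) v"
  proof (rule fsum_eq_sum_atMost[symmetric])
    fix n
    assume "?D < n"
    then have "F n w = 0" if "wdeg w \<le> ?D" for w
      using summ that by (auto simp: nc_summable_def vanishes_below_def; meson le_trans not_le)
    then show "negA Lam (F n) v = 0"
      by (simp add: negA_eq_sum_wdeg_le[of v ?D])
  qed
  finally show "negA Lam (fsum F) v = fsum (\<lambda>n. negA Lam (F n)) v" .
qed

end

section \<open>Inverting \<open>\<sigma>\<^sub>1\<close>\<close>

lemma homogeneous_S_convolution_inverse:
  assumes L0: "L 0 = nc_one"
    and conv: "\<And>n. fsum (\<lambda>i. if i \<le> n then nc_mult (S i) (L (n - i)) else nc_zero)
                   = (if n = 0 then nc_one else nc_zero)"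
  shows "homogeneous n (L n)"
proof (induction n rule: less_induct)
  case (less n)
  show ?case
  proof (cases n)
    case 0
    with L0 show ?thesis by (simp add: homogeneous_one)
  next
    case (Suc m)
    have "L n w = 0" if "wdeg w \<noteq> n" for w
    proof -
      have higher: "nc_mult (S (Suc i)) (L (m - i)) w = 0" if "i \<le> m" for i
      proof -
        have "homogeneous (Suc i + (m - i)) (nc_mult (S (Suc i)) (L (m - i)))"
          using that Suc by (intro homogeneous_mult homogeneous_S less) simp
        with that Suc \<open>wdeg w \<noteq> n\<close> show ?thesis by (auto simp: homogeneous_def)
      qed
      have "0 = (\<Sum>i\<le>n. nc_mult (S i) (L (n - i)) w)"
        using fun_cong[OF conv[of n], of w] Suc by (simp add: fsum_upto nc_zero_def)
      also have "\<dots> = L n w"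
        unfolding Suc sum.atMost_Suc_shift by (simp add: higher)
      finally show ?thesis by simp
    qed
    then show ?thesis by (auto simp: homogeneous_def)
  qed
qed

lemma S_series_mult_right_inverse:
  assumes L_hom: "\<And>n. homogeneous n (L n)"
    and conv: "\<And>n. fsum (\<lambda>i. if i \<le> n then nc_mult (S i) (L (n - i)) else nc_zero)
                   = (if n = 0 then nc_one else nc_zero)"
    and x_eq: "x = fsum (\<lambda>n. nc_mult (L n) (nc_pow x n))"
  shows "nc_mult (fsum (\<lambda>i. nc_mult (S i) (nc_pow x i))) x = nc_one"
proof -
  define G where "G i j = nc_mult (nc_mult (S i) (L j)) (nc_pow x (i + j))" for i j
  have "nc_mult (nc_mult (S i) (nc_pow x i)) x = fsum (G i)" for i
  proof -
    have "nc_mult (nc_mult (S i) (nc_pow x i)) x = nc_mult (S i) (nc_mult x (nc_pow x i))"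
      by (simp add: nc_mult_assoc nc_pow_Suc_right[symmetric])
    also have "\<dots> = fsum (\<lambda>j. nc_mult (S i) (nc_mult (nc_mult (L j) (nc_pow x j)) (nc_pow x i)))"
      by (subst x_eq) (simp add: fsum_mult_left fsum_mult_right nc_summable_mult_right
                                 nc_summable_homogeneous_mult L_hom del: nc_pow.simps)
    also have "\<dots> = fsum (G i)"
      unfolding G_def by (simp add: nc_mult_assoc nc_pow_add[symmetric] add.commute)
    finally show ?thesis .
  qed
  then have "nc_mult (fsum (\<lambda>i. nc_mult (S i) (nc_pow x i))) x = fsum (\<lambda>i. fsum (G i))"
    by (simp add: fsum_mult_right nc_summable_homogeneous_mult homogeneous_S)
  also have "\<dots> = fsum (\<lambda>n. fsum (\<lambda>i. if i \<le> n then G i (n - i) else nc_zero))"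
    unfolding G_def
    by (rule fsum_triangle)
       (intro vanishes_below_mult_left homogeneous_vanishes_below homogeneous_mult homogeneous_S L_hom)
  also have "\<dots> = fsum (\<lambda>n. nc_mult (if n = 0 then nc_one else nc_zero) (nc_pow x n))"
  proof (rule arg_cong[where f = fsum], rule ext)
    fix n
    have summ: "nc_summable (\<lambda>i. if i \<le> n then nc_mult (S i) (L (n - i)) else nc_zero)"
      unfolding nc_summable_def
      by (auto intro: vanishes_below_mult_left homogeneous_vanishes_below homogeneous_S)
    have "fsum (\<lambda>i. if i \<le> n then G i (n - i) else nc_zero)
        = fsum (\<lambda>i. nc_mult (if i \<le> n then nc_mult (S i) (L (n - i)) else nc_zero) (nc_pow x n))"
      by (intro arg_cong[where f = fsum] ext) (simp add: G_def)
    also have "\<dots> = nc_mult (if n = 0 then nc_one else nc_zero) (nc_pow x n)"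
      by (simp add: fsum_mult_right[OF summ, symmetric] conv)
    finally show "fsum (\<lambda>i. if i \<le> n then G i (n - i) else nc_zero)
        = nc_mult (if n = 0 then nc_one else nc_zero) (nc_pow x n)" .
  qed
  also have "\<dots> = nc_one"
    by (subst fsum_single) auto
  finally show ?thesis .
qed

lemma nc_subst_sigma1_pow:
  assumes inv: "nc_mult (fsum (\<lambda>i. nc_mult (S i) (nc_pow x i))) x = nc_one"
  shows "nc_mult (nc_subst x (nc_pow sigma1 n)) (nc_pow x n) = nc_one"
proof (induction n)
  case 0
  show ?case by (simp add: nc_subst_one)
next
  case (Suc n)
  let ?P = "nc_subst x (nc_pow sigma1 n)"
  have summ: "nc_summable (\<lambda>i. nc_mult (S i) (F i))" for F
    by (intro nc_summable_homogeneous_mult homogeneous_S)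
  have "nc_subst x (nc_pow sigma1 (Suc n)) = fsum (\<lambda>i. nc_mult (S i) (nc_mult ?P (nc_pow x i)))"
    by (simp add: sigma1_def fsum_mult_right nc_summable_S nc_subst_fsum summ
                  nc_subst_homogeneous_mult[OF homogeneous_S])
  then have "nc_mult (nc_subst x (nc_pow sigma1 (Suc n))) (nc_pow x (Suc n))
      = fsum (\<lambda>i. nc_mult (S i) (nc_mult ?P (nc_mult (nc_pow x i) (nc_pow x (Suc n)))))"
    by (simp add: fsum_mult_right summ nc_mult_assoc del: nc_pow.simps)
  also have "\<dots> = fsum (\<lambda>i. nc_mult (nc_mult (S i) (nc_pow x i)) x)"
  proof (rule arg_cong[where f = fsum], rule ext)
    fix i
    have "nc_mult (nc_pow x i) (nc_pow x (Suc n)) = nc_mult (nc_pow x n) (nc_mult (nc_pow x i) x)"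
      by (simp only: nc_pow_add[symmetric] nc_pow_Suc_right[symmetric]) (simp add: add.commute)
    then show "nc_mult (S i) (nc_mult ?P (nc_mult (nc_pow x i) (nc_pow x (Suc n))))
        = nc_mult (nc_mult (S i) (nc_pow x i)) x"
      by (simp add: nc_mult_assoc[symmetric] Suc.IH del: nc_pow.simps)
  qed
  also have "\<dots> = nc_one"
    using inv by (simp add: fsum_mult_right[OF summ, symmetric] del: nc_pow.simps)
  finally show ?case .
qed

lemma sigma1_expansion_right_inverse:
  assumes K_hom: "\<And>n. homogeneous n (K n)"
    and K_eq: "sigma1 = fsum (\<lambda>n. nc_mult (K n) (nc_pow sigma1 n))"
    and inv: "nc_mult (fsum (\<lambda>i. nc_mult (S i) (nc_pow x i))) x = nc_one"
  shows "nc_mult (fsum K) x = nc_one"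
proof -
  have "fsum (\<lambda>i. nc_mult (S i) (nc_pow x i)) = nc_subst x sigma1"
    by (simp add: sigma1_def nc_subst_fsum nc_summable_S nc_subst_homogeneous[OF homogeneous_S])
  also have "\<dots> = nc_subst x (fsum (\<lambda>n. nc_mult (K n) (nc_pow sigma1 n)))"
    using K_eq by (rule arg_cong)
  also have "\<dots> = fsum (\<lambda>n. nc_mult (K n) (nc_mult (nc_subst x (nc_pow sigma1 n)) (nc_pow x n)))"
    by (simp add: nc_subst_fsum nc_summable_homogeneous_mult K_hom nc_subst_homogeneous_mult[OF K_hom])
  also have "\<dots> = fsum K"
    by (simp add: nc_subst_sigma1_pow[OF inv])
  finally show ?thesis
    using inv by simp
qed

theorem mainTheorem1:
  fixes Lam K :: "nat \<Rightarrow> ncsym" and g h :: ncsym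
  assumes Lam0: "Lam 0 = nc_one"
    and Lam_def: "\<And>n. fsum (\<lambda>i. if i \<le> n then nc_mult (S i) (nc_smult ((-1) ^ (n - i)) (Lam (n - i))) else nc_zero)
                     = (if n = 0 then nc_one else nc_zero)"
    and K0: "K 0 = nc_one"
    and K_hom: "\<And>n. homogeneous n (K n)"
    and K_eq: "sigma1 = fsum (\<lambda>n. nc_mult (K n) (nc_pow sigma1 n))"
    and g0: "g [] = 1"
    and g_eq: "g = fsum (\<lambda>n. nc_mult (S n) (nc_pow g n))"
    and h_inv: "nc_mult g h = nc_one" "nc_mult h g = nc_one"
  shows "nc_add nc_one (fsum (\<lambda>n. if n = 0 then nc_zero else K n)) = negA Lam h"
proof -
  define L where "L n = nc_smult ((-1) ^ n) (Lam n)" for n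
  have conv: "\<And>n. fsum (\<lambda>i. if i \<le> n then nc_mult (S i) (L (n - i)) else nc_zero)
                   = (if n = 0 then nc_one else nc_zero)"
    using Lam_def by (simp only: L_def)
  have L_hom: "homogeneous n (L n)" for n
    by (rule homogeneous_S_convolution_inverse[OF _ conv]) (simp add: L_def Lam0)
  have Lam_hom: "homogeneous n (Lam n)" for n
    using L_hom[of n] by (simp add: L_def homogeneous_smult_iff)
  define x where "x = negA Lam g"
  have "x = negA Lam (fsum (\<lambda>n. nc_mult (S n) (nc_pow g n)))"
    unfolding x_def using g_eq by (rule arg_cong)
  also have "\<dots> = fsum (\<lambda>n. nc_mult (L n) (nc_pow x n))"
    by (simp add: negA_fsum[OF Lam_hom] nc_summable_homogeneous_mult homogeneous_S
                  negA_mult[OF Lam_hom] negA_pow[OF Lam_hom] negA_S[OF Lam_hom Lam0] L_def x_def)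
  finally have x_eq: "x = fsum (\<lambda>n. nc_mult (L n) (nc_pow x n))" .
  have "nc_mult (fsum K) x = nc_one"
    by (rule sigma1_expansion_right_inverse[OF K_hom K_eq S_series_mult_right_inverse[OF L_hom conv x_eq]])
  moreover have "nc_mult x (negA Lam h) = nc_one"
    using h_inv(1) by (simp add: x_def negA_mult[OF Lam_hom, symmetric] negA_one[OF Lam_hom])
  ultimately have "fsum K = negA Lam h"
    by (rule nc_mult_inverse_unique)
  with K0 show ?thesis
    using nc_add_fsum_split_first[of K] by (simp add: nc_summable_def homogeneous_vanishes_below K_hom)
qed

end
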